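(* Let $X$ be a spatially independent random subcomplex of $\triangle_n$. Then for every $Y\in S_n$ and all $Z_1\subset Z_2$ in $S_n$ with $\mathbb{P}(Z_2\subset X)>0$, \[ \mathbb{P}(Y\subset X\mid Z_1\subset X)\le\mathbb{P}(Y\subset X\mid Z_2\subset X). \]
   Context: $\triangle_n=2^{[n]}$; $S_n$ is the set of subcomplexes of $\triangle_n$ (families of subsets of $[n]$ closed under taking subsets); a random subcomplex is an $S_n$-valued random variable. $X$ is spatially independent if $\mathbb{P}(Y_1\cup Y_2\subset X)\,\mathbb{P}(Y_1\cap Y_2\subset X)=\mathbb{P}(Y_1\subset X)\,\mathbb{P}(Y_2\subset X)$ for all $Y_1,Y_2\in S_n$. *)

theory Defs
  imports "HOL-Probability.Probability"
begin

definition full_simplex :: "nat \<Rightarrow> nat set set" where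
  "full_simplex n = Pow {1..n}"

definition subcomplexes :: "nat \<Rightarrow> nat set set set" where
  "subcomplexes n = {K. K \<subseteq> full_simplex n \<and> (\<forall>A\<in>K. \<forall>B. B \<subseteq> A \<longrightarrow> B \<in> K)}"

definition random_subcomplex :: "nat \<Rightarrow> nat set set pmf \<Rightarrow> bool" where
  "random_subcomplex n X \<longleftrightarrow> set_pmf X \<subseteq> subcomplexes n"

definition contain_prob :: "nat set set pmf \<Rightarrow> nat set set \<Rightarrow> real" where
  "contain_prob X Y = measure_pmf.prob X {K. Y \<subseteq> K}"

definition cond_contain_prob :: "nat set set pmf \<Rightarrow> nat set set \<Rightarrow> nat set set \<Rightarrow> real" where
  "cond_contain_prob X Y Z =
     measure_pmf.prob X {K. Y \<subseteq> K \<and> Z \<subseteq> K} / measure_pmf.prob X {K. Z \<subseteq> K}"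

definition spatially_independent :: "nat \<Rightarrow> nat set set pmf \<Rightarrow> bool" where
  "spatially_independent n X \<longleftrightarrow>
     (\<forall>Y1\<in>subcomplexes n. \<forall>Y2\<in>subcomplexes n.
        contain_prob X (Y1 \<union> Y2) * contain_prob X (Y1 \<inter> Y2)
          = contain_prob X Y1 * contain_prob X Y2)"

end

theory Submission
  imports Defs
begin

text \<open>Apply spatial independence to \<open>Y \<union> Z\<^sub>1\<close> and \<open>Z\<^sub>2\<close>: their union is \<open>Y \<union> Z\<^sub>2\<close> and
  their intersection contains \<open>Z\<^sub>1\<close>, so monotonicity of \<open>P(\<cdot> \<subseteq> X)\<close> yields
  \<open>P(Y \<union> Z\<^sub>1 \<subseteq> X) P(Z\<^sub>2 \<subseteq> X) \<le> P(Y \<union> Z\<^sub>2 \<subseteq> X) P(Z\<^sub>1 \<subseteq> X)\<close>, which is the claim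
  after dividing by \<open>P(Z\<^sub>1 \<subseteq> X) P(Z\<^sub>2 \<subseteq> X) > 0\<close>.\<close>

lemma subcomplexes_Un:
  "A \<in> subcomplexes n \<Longrightarrow> B \<in> subcomplexes n \<Longrightarrow> A \<union> B \<in> subcomplexes n"
  unfolding subcomplexes_def by auto

lemma contain_prob_nonneg: "0 \<le> contain_prob X Y"
  unfolding contain_prob_def by simp

lemma contain_prob_antimono: "A \<subseteq> B \<Longrightarrow> contain_prob X B \<le> contain_prob X A"
  unfolding contain_prob_def by (rule measure_pmf.finite_measure_mono) auto

lemma cond_contain_prob_eq_Un:
  "cond_contain_prob X Y Z = contain_prob X (Y \<union> Z) / contain_prob X Z"
proof -
  have "{K. Y \<subseteq> K \<and> Z \<subseteq> K} = {K. Y \<union> Z \<subseteq> K}" by blast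
  then show ?thesis unfolding cond_contain_prob_def contain_prob_def by (simp only:)
qed

lemma spatially_independent_contain_prob_cross_le:
  assumes "spatially_independent n X"
    and "Y \<in> subcomplexes n" and "Z1 \<in> subcomplexes n" and "Z2 \<in> subcomplexes n"
    and "Z1 \<subseteq> Z2"
  shows "contain_prob X (Y \<union> Z1) * contain_prob X Z2
           \<le> contain_prob X (Y \<union> Z2) * contain_prob X Z1"
proof -
  let ?p = "contain_prob X"
  have "Y \<union> Z1 \<in> subcomplexes n" using assms(2,3) by (rule subcomplexes_Un)
  then have "?p ((Y \<union> Z1) \<union> Z2) * ?p ((Y \<union> Z1) \<inter> Z2) = ?p (Y \<union> Z1) * ?p Z2"
    using assms(1,4) unfolding spatially_independent_def by blast
  moreover have "(Y \<union> Z1) \<union> Z2 = Y \<union> Z2" using assms(5) by blast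
  ultimately have indep: "?p (Y \<union> Z2) * ?p ((Y \<union> Z1) \<inter> Z2) = ?p (Y \<union> Z1) * ?p Z2"
    by simp
  have "?p ((Y \<union> Z1) \<inter> Z2) \<le> ?p Z1"
    using assms(5) by (intro contain_prob_antimono) blast
  then have "?p (Y \<union> Z2) * ?p ((Y \<union> Z1) \<inter> Z2) \<le> ?p (Y \<union> Z2) * ?p Z1"
    by (rule mult_left_mono[OF _ contain_prob_nonneg])
  then show ?thesis by (simp only: indep)
qed

theorem mainTheorem7:
  fixes n :: nat and X :: "nat set set pmf" and Y Z1 Z2 :: "nat set set"
  assumes "random_subcomplex n X"
    and "spatially_independent n X"
    and "Y \<in> subcomplexes n" and "Z1 \<in> subcomplexes n" and "Z2 \<in> subcomplexes n"
    and "Z1 \<subseteq> Z2"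
    and "contain_prob X Z2 > 0"
  shows "cond_contain_prob X Y Z1 \<le> cond_contain_prob X Y Z2"
proof -
  have cross: "contain_prob X (Y \<union> Z1) * contain_prob X Z2
                 \<le> contain_prob X (Y \<union> Z2) * contain_prob X Z1"
    using assms(2-6) by (rule spatially_independent_contain_prob_cross_le)
  have "contain_prob X Z1 > 0"
    using contain_prob_antimono[OF assms(6), of X] assms(7) by linarith
  with assms(7) cross show ?thesis
    unfolding cond_contain_prob_eq_Un by (simp add: divide_simps mult.commute)
qed

end
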